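(* Let $h_1,h_2:(0,\infty)\to\mathbb{R}$ be non-degenerate hockey-stick curves that are not ordered, i.e. neither $h_1\le h_2$ pointwise nor $h_2\le h_1$ pointwise. Then one of $\operatorname{supp}(h_1),\operatorname{supp}(h_2)$ links $X(h_1,h_2)$ and $X(h_2,h_1)$.
   Context: Write $\mathbb{R}^\times:=(0,\infty)$. A hockey-stick curve is a function of the form $h_L(x)=\mathbb{E}_{Z\sim L}[(1-xe^{-Z})_+]$, $x>0$, for a PLD $L$ (a distribution $L$ on $\mathbb{R}\cup\{\infty\}$ with $\mathbb{E}[e^{-Z}]\le1$, $e^{-\infty}=0$); equivalently a convex decreasing $h:\mathbb{R}^\times\to[0,1]$ with $\lim_{x\to0}h(x)=1$ and $h(x)\ge1-x$. It is non-degenerate if the corresponding $L$ has support in $\mathbb{R}$ containing at least two points. For $h:\mathbb{R}^\times\to\mathbb{R}$, $\operatorname{supp}(h):=\{x\in\mathbb{R}^\times: \text{for every open } U\ni x,\ h|_U \text{ is not affine}\}$. $X(h_1,h_2):=\{x\in\mathbb{R}^\times: h_1(x)<h_2(x)\}$. For $S,T_1,T_2\subseteq\mathbb{R}^\times$, $S$ links $T_1$ and $T_2$ if there is $c>0$ with $cS\cap T_1\ne\varnothing$ and $cS\cap T_2\ne\varnothing$, where $cS=\{cs:s\in S\}$. *)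

theory Defs
  imports "HOL-Probability.Probability"
begin

text \<open>A PLD L on the extended line R \<union> {\<infinity>} is represented by its restriction mu to the
  reals (a sub-probability measure on the Borel sets of R); the remaining mass
  1 - mu(R) sits at \<infinity>.  The condition E[exp(-Z)] \<le> 1 uses exp(-\<infinity>) = 0.\<close>

definition is_PLD :: "real measure \<Rightarrow> bool" where
  "is_PLD mu \<longleftrightarrow> sets mu = sets borel \<and> subprob_space mu \<and>
     (\<integral>\<^sup>+ z. ennreal (exp (- z)) \<partial>mu) \<le> 1"

text \<open>h_L(x) = E[(1 - x exp(-Z))_+]; the atom at \<infinity> contributes (1 - x*0)_+ = 1.\<close>

definition hockey_stick_of :: "real measure \<Rightarrow> real \<Rightarrow> real" where
  "hockey_stick_of mu x =
     (\<integral> z. max 0 (1 - x * exp (- z)) \<partial>mu) + (1 - measure mu (space mu))"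

definition measure_support :: "real measure \<Rightarrow> real set" where
  "measure_support mu = {z. \<forall>e>0. emeasure mu (ball z e) > 0}"

definition nondeg_hockey_stick :: "(real \<Rightarrow> real) \<Rightarrow> bool" where
  "nondeg_hockey_stick h \<longleftrightarrow>
     (\<exists>mu. is_PLD mu \<and> (\<forall>x>0. h x = hockey_stick_of mu x) \<and>
        (\<exists>a b. a \<noteq> b \<and> a \<in> measure_support mu \<and> b \<in> measure_support mu))"

definition hsupp :: "(real \<Rightarrow> real) \<Rightarrow> real set" where
  "hsupp h = {x. x > 0 \<and> (\<forall>U. open U \<and> x \<in> U \<longrightarrow>
       \<not> (\<exists>a b. \<forall>y \<in> U \<inter> {0<..}. h y = a * y + b))}"

definition Xset :: "(real \<Rightarrow> real) \<Rightarrow> (real \<Rightarrow> real) \<Rightarrow> real set" where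
  "Xset h1 h2 = {x. x > 0 \<and> h1 x < h2 x}"

definition links :: "real set \<Rightarrow> real set \<Rightarrow> real set \<Rightarrow> bool" where
  "links S T1 T2 \<longleftrightarrow> (\<exists>c>0. (\<lambda>s. c * s) ` S \<inter> T1 \<noteq> {} \<and> (\<lambda>s. c * s) ` S \<inter> T2 \<noteq> {})"

end

theory Submission
  imports Defs
begin

text \<open>
  Write \<open>D = h1 - h2\<close>, \<open>X = {D < 0}\<close>, \<open>Y = {D > 0}\<close> and suppose that neither kink set links
  \<open>X\<close> and \<open>Y\<close>. By convexity every component of \<open>X\<close> contains a kink of \<open>h1\<close>, and every component
  of \<open>Y\<close> one of \<open>h2\<close>. Non-linking then keeps the kinks of \<open>h1\<close> away from the closure of \<open>Y\<close> and
  those of \<open>h2\<close> away from the closure of \<open>X\<close>, which forces every zero of \<open>D\<close> to be a transversal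
  crossing. Consequently the ratio \<open>r\<close> of two kinks of \<open>h1\<close> preserves the sign of \<open>D\<close> under
  \<open>x \<mapsto> r x\<close>, every component of \<open>{D \<noteq> 0}\<close> is bounded and contains exactly one kink, and \<open>D\<close>
  is affine between consecutive kinks. Along three consecutive components this yields
  \<open>D (r ^ n * s) = A ^ n * D s\<close> for some \<open>A > 0\<close> and all integers \<open>n\<close>, which is incompatible with
  \<open>\<bar>D x\<bar> \<le> min 1 x\<close>.
\<close>

lemma links_commute: "links S T1 T2 = links S T2 T1"
  unfolding links_def by blast

lemma convex_on_chord:
  fixes h :: "real \<Rightarrow> real"
  assumes "convex_on I h" "u \<in> I" "v \<in> I" "u < x" "x < v"
  shows "h x * (v - u) \<le> (v - x) * h u + (x - u) * h v"
proof -
  define t where "t = (x - u) / (v - u)"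
  have t: "0 \<le> t" "t \<le> 1" "t * (v - u) = x - u"
    using assms(4,5) by (auto simp: t_def field_simps)
  then have "x = (1 - t) *\<^sub>R u + t *\<^sub>R v"
    by (simp add: algebra_simps)
  then have "h x \<le> (1 - t) * h u + t * h v"
    using convex_onD[OF assms(1) t(1,2) assms(2,3)] by simp
  then have "h x * (v - u) \<le> ((1 - t) * h u + t * h v) * (v - u)"
    using assms(4,5) by (intro mult_right_mono) auto
  also have "\<dots> = ((1 - t) * (v - u)) * h u + (t * (v - u)) * h v"
    by (simp add: algebra_simps)
  also have "(1 - t) * (v - u) = v - x"
    using t(3) by (simp add: left_diff_distrib)
  finally show ?thesis
    using t(3) by simp
qed

lemma convex_on_bounded_above_antimono:
  fixes h :: "real \<Rightarrow> real"
  assumes "convex_on {p<..} h" "\<And>x. p < x \<Longrightarrow> h x \<le> B" "p < x" "x < y"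
  shows "h y \<le> h x"
proof (rule ccontr)
  assume "\<not> h y \<le> h x"
  then have rise: "h y - h x > 0" by simp
  define z where "z = y + (y - x) * (B - h y + 1) / (h y - h x)"
  have "B - h y + 1 > 0"
    using assms(2)[of y] assms(3,4) by simp
  then have zy: "y < z"
    using rise assms(4) by (simp add: z_def)
  have "h y * (z - x) \<le> (z - y) * h x + (y - x) * h z"
    using assms(3,4) zy by (intro convex_on_chord[OF assms(1)]) auto
  moreover have "(z - y) * (h y - h x) = (y - x) * (B - h y + 1)"
    using rise by (simp add: z_def)
  ultimately have "(y - x) * (B + 1) \<le> (y - x) * h z"
    by (simp add: algebra_simps)
  then have "B + 1 \<le> h z"
    using assms(4) by simp
  then show False
    using assms(2)[of z] assms(3,4) zy by simp
qed

lemma slope_nonneg_if_affine_nonneg_on_ray: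
  fixes a b :: real
  assumes "\<And>x. p < x \<Longrightarrow> 0 \<le> a * x + b"
  shows "0 \<le> a"
proof (rule ccontr)
  assume "\<not> 0 \<le> a"
  then have a: "a < 0" by simp
  define x where "x = max (p + 1) (1 - b / a)"
  have "a * x \<le> a * (1 - b / a)"
    using a by (intro mult_left_mono_neg) (auto simp: x_def)
  then have "a * x + b \<le> a"
    using a by (simp add: algebra_simps)
  moreover have "p < x"
    by (simp add: x_def)
  ultimately show False
    using assms[of x] a by simp
qed

lemma overlapping_local_lines_eq:
  fixes h :: "real \<Rightarrow> real"
  assumes "0 < e" "\<bar>y - x\<bar> < d / 2"
    and "\<forall>z. \<bar>z - x\<bar> < d \<longrightarrow> h z = a * z + b" "\<forall>z. \<bar>z - y\<bar> < e \<longrightarrow> h z = a' * z + b'"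
  shows "a = a' \<and> b = b'"
proof -
  define k where "k = min e (d / 2) / 2"
  have "0 < d"
    using assms(2) abs_ge_zero[of "y - x"] by linarith
  then have "0 < k" "k \<le> d / 4" "k < e"
    using assms(1) by (auto simp: k_def min_def)
  then have "\<bar>y - x\<bar> < d" "\<bar>y + k - x\<bar> < d" "\<bar>y + k - y\<bar> < e"
    using assms(2) by arith+
  then have "a * y + b = a' * y + b'" "a * (y + k) + b = a' * (y + k) + b'"
    using assms(1,3,4) by (metis abs_zero diff_self)+
  then have "a * k = a' * k"
    unfolding distrib_left by linarith
  then have "a = a'"
    using \<open>0 < k\<close> by simp
  then show ?thesis
    using \<open>a * y + b = a' * y + b'\<close> by simp
qed

lemma open_eventually_nhds: "open {x. eventually P (nhds x)}"
  unfolding open_subopen[of "{x. eventually P (nhds x)}"]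
proof (intro ballI)
  fix x
  assume "x \<in> {x. eventually P (nhds x)}"
  then obtain T where T: "open T" "x \<in> T" "\<forall>y\<in>T. P y"
    unfolding eventually_nhds by auto
  then have "T \<subseteq> {x. eventually P (nhds x)}"
    unfolding eventually_nhds by blast
  then show "\<exists>T'. open T' \<and> x \<in> T' \<and> T' \<subseteq> {x. eventually P (nhds x)}"
    using T(1,2) by blast
qed

lemma open_eventually_at:
  fixes P :: "'a :: t1_space \<Rightarrow> bool"
  shows "open {x. eventually P (at x)}"
  unfolding open_subopen[of "{x. eventually P (at x)}"]
proof (intro ballI)
  fix x
  assume "x \<in> {x. eventually P (at x)}"
  then obtain T where T: "open T" "x \<in> T" "\<And>y. y \<in> T \<Longrightarrow> y \<noteq> x \<Longrightarrow> P y"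
    unfolding eventually_at_topological by auto
  have "eventually P (at y)" if "y \<in> T" for y
  proof (cases "y = x")
    case False
    then show ?thesis
      unfolding eventually_at_topological
      using T that by (intro exI[of _ "T - {x}"]) (auto simp: open_Diff)
  qed (use \<open>x \<in> {x. eventually P (at x)}\<close> in simp)
  then show "\<exists>T'. open T' \<and> x \<in> T' \<and> T' \<subseteq> {x. eventually P (at x)}"
    using T(1,2) by blast
qed

section \<open>Kinks of a function on the positive reals\<close>

lemma hsupp_subset: "hsupp h \<subseteq> {0<..}"
  unfolding hsupp_def by auto

lemma hsupp_cong:
  assumes "\<And>x. 0 < x \<Longrightarrow> h x = k x"
  shows "hsupp h = hsupp k"
proof -
  have "(\<forall>y\<in>U \<inter> {0<..}. h y = a * y + b) \<longleftrightarrow> (\<forall>y\<in>U \<inter> {0<..}. k y = a * y + b)" for U a b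
    using assms by auto
  then show ?thesis
    unfolding hsupp_def by simp
qed

lemma locally_affine_outside_hsupp:
  assumes "0 < x" "x \<notin> hsupp h"
  shows "\<exists>d>0. \<exists>a b. \<forall>y. \<bar>y - x\<bar> < d \<longrightarrow> 0 < y \<and> h y = a * y + b"
proof -
  from assms obtain U a b where U: "open U" "x \<in> U" "\<And>y. y \<in> U \<inter> {0<..} \<Longrightarrow> h y = a * y + b"
    unfolding hsupp_def by blast
  obtain e where e: "0 < e" "ball x e \<subseteq> U"
    using openE[OF U(1,2)] by blast
  have "0 < y \<and> h y = a * y + b" if "\<bar>y - x\<bar> < min e x" for y
  proof -
    have "0 < y" "y \<in> U"
      using that e by (auto simp: dist_real_def)
    then show ?thesis
      using U(3) by simp
  qed
  moreover have "0 < min e x"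
    using e assms by simp
  ultimately show ?thesis
    by blast
qed

lemma affine_on_connected_outside_hsupp:
  assumes T: "connected T" "open T" "T \<subseteq> {0<..}" "T \<inter> hsupp h = {}"
  shows "\<exists>a b. \<forall>x\<in>T. h x = a * x + b"
proof (cases "T = {}")
  case False
  then obtain x0 where x0: "x0 \<in> T" by auto
  define local_line where
    "local_line x = (SOME ab. \<exists>d>0. \<forall>y. \<bar>y - x\<bar> < d \<longrightarrow> h y = fst ab * y + snd ab)" for x
  have line: "\<exists>d>0. \<forall>y. \<bar>y - x\<bar> < d \<longrightarrow> h y = fst (local_line x) * y + snd (local_line x)"
    if "x \<in> T" for x
  proof -
    have x: "0 < x" "x \<notin> hsupp h"
      using that T(3,4) by auto
    obtain d a b where "0 < d" "\<forall>y. \<bar>y - x\<bar> < d \<longrightarrow> 0 < y \<and> h y = a * y + b"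
      using locally_affine_outside_hsupp[OF x] by blast
    then have "\<exists>ab. \<exists>d>0. \<forall>y. \<bar>y - x\<bar> < d \<longrightarrow> h y = fst ab * y + snd ab"
      by (intro exI[of _ "(a, b)"]) auto
    then show ?thesis
      unfolding local_line_def by (rule someI_ex)
  qed
  have "eventually (\<lambda>y. local_line x = local_line y) (at x within T)" if x: "x \<in> T" for x
  proof -
    obtain d where d: "0 < d" "\<forall>z. \<bar>z - x\<bar> < d \<longrightarrow> h z = fst (local_line x) * z + snd (local_line x)"
      using line[OF x] by blast
    have "local_line x = local_line y" if y: "y \<in> T" "dist y x < d / 2" for y
    proof -
      obtain e where e: "0 < e" "\<forall>z. \<bar>z - y\<bar> < e \<longrightarrow> h z = fst (local_line y) * z + snd (local_line y)"
        using line[OF y(1)] by blast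
      show ?thesis
        using overlapping_local_lines_eq[OF e(1) _ d(2) e(2)] y(2) by (simp add: dist_real_def prod_eq_iff)
    qed
    then show ?thesis
      unfolding eventually_at using d(1) by (intro exI[of _ "d / 2"]) auto
  qed
  then have "local_line x0 = local_line x" if "x \<in> T" for x
    using connected_local_const[OF T(1) x0 that] by blast
  with line have "h x = fst (local_line x0) * x + snd (local_line x0)" if "x \<in> T" for x
    using that by fastforce
  then show ?thesis
    by blast
qed simp

lemma affine_on_closed_interval:
  fixes h :: "real \<Rightarrow> real"
  assumes "a < b" "continuous_on {a..b} h" "\<And>x. x \<in> {a<..<b} \<Longrightarrow> h x = m * x + c" "x \<in> {a..b}"
  shows "h x = m * x + c"
proof -
  have "continuous_on (closure {a<..<b}) (\<lambda>x. h x - (m * x + c))"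
    using assms(1,2) by (auto intro!: continuous_intros)
  then have "h x - (m * x + c) = 0"
    by (rule continuous_constant_on_closure) (use assms in auto)
  then show ?thesis by simp
qed

lemma links_if_near:
  assumes "s \<in> S" "s' \<in> S" "0 < s" "0 < s'" "s \<in> T1" "open T1" "T2 \<subseteq> {0<..}" "s' \<in> closure T2"
  shows "links S T1 T2"
proof -
  obtain d where d: "0 < d" "ball s d \<subseteq> T1"
    using openE[OF assms(6,5)] by blast
  obtain y where y: "y \<in> T2" "\<bar>y - s'\<bar> < d * s' / s"
    using assms(3,4,8) d(1) unfolding closure_approachable dist_real_def by (metis divide_pos_pos mult_pos_pos)
  define c where "c = y / s'"
  have "0 < c"
    using y(1) assms(4,7) by (auto simp: c_def)
  have "c * s - s = s * (y - s') / s'"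
    using assms(4) by (simp add: c_def field_simps)
  then have "\<bar>c * s - s\<bar> = s * \<bar>y - s'\<bar> / s'"
    using assms(3,4) by (simp add: abs_mult abs_divide)
  also have "\<dots> < d"
    using y(2) assms(3,4) by (simp add: field_simps)
  finally have "c * s \<in> T1"
    using d(2) by (auto simp: dist_real_def abs_minus_commute)
  moreover have "c * s' = y"
    using assms(4) by (simp add: c_def)
  ultimately show ?thesis
    unfolding links_def using \<open>0 < c\<close> assms(1,2) y(1) by blast
qed

section \<open>The difference of two hockey-stick-like curves\<close>

locale hockey_pair =
  fixes f g :: "real \<Rightarrow> real"
  assumes convex_f: "convex_on {0<..} f" and convex_g: "convex_on {0<..} g"
    and bounds_f: "\<And>x. 0 < x \<Longrightarrow> 0 \<le> f x \<and> f x \<le> 1 \<and> 1 - x \<le> f x"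
    and bounds_g: "\<And>x. 0 < x \<Longrightarrow> 0 \<le> g x \<and> g x \<le> 1 \<and> 1 - x \<le> g x"
begin

definition D :: "real \<Rightarrow> real" where
  "D x = f x - g x"

definition sign_invariant :: "real \<Rightarrow> bool" where
  "sign_invariant l \<longleftrightarrow> 0 < l \<and> (\<forall>x>0. sgn (D (l * x)) = sgn (D x))"

definition sign_component :: "real \<Rightarrow> real \<Rightarrow> real \<Rightarrow> bool" where
  "sign_component \<sigma> p q \<longleftrightarrow>
     0 < p \<and> p < q \<and> D p = 0 \<and> D q = 0 \<and> \<sigma> \<noteq> 0 \<and> (\<forall>z\<in>{p<..<q}. sgn (D z) = \<sigma>)"

sublocale swap: hockey_pair g f
  by unfold_locales (fact convex_g convex_f bounds_g bounds_f)+

lemma swap_D: "swap.D x = - D x"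
  by (simp add: D_def swap.D_def)

lemma continuous_on_D: "continuous_on {0<..} D"
  unfolding D_def[abs_def]
  using convex_on_continuous[OF open_greaterThan convex_f] convex_on_continuous[OF open_greaterThan convex_g]
  by (intro continuous_intros)

lemma isCont_D: "0 < x \<Longrightarrow> isCont D x"
  using continuous_on_D continuous_on_eq_continuous_at[OF open_greaterThan] by auto

lemma abs_D_le:
  assumes "0 < x"
  shows "\<bar>D x\<bar> \<le> x" "\<bar>D x\<bar> \<le> 1"
  using bounds_f[OF assms] bounds_g[OF assms] by (auto simp: D_def)

lemma Xset_iff: "x \<in> Xset f g \<longleftrightarrow> 0 < x \<and> D x < 0"
  by (auto simp: Xset_def D_def)

lemma Yset_iff: "x \<in> Xset g f \<longleftrightarrow> 0 < x \<and> 0 < D x"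
  by (auto simp: Xset_def D_def)

lemma open_Xset: "open (Xset f g)"
proof -
  have "Xset f g = {0<..} \<inter> D -` {..<0}"
    by (auto simp: Xset_iff)
  then show ?thesis
    using continuous_open_preimage[OF continuous_on_D open_greaterThan open_lessThan] by simp
qed

lemma D_tendsto_at_right_0: "(D \<longlongrightarrow> 0) (at_right 0)"
proof (rule Lim_null_comparison)
  show "eventually (\<lambda>x. norm (D x) \<le> x) (at_right 0)"
    using eventually_at_right_less[of 0] by eventually_elim (simp add: abs_D_le)
qed (rule tendsto_ident_at)

lemma D_tendsto_at_root:
  assumes "0 < w" "D w = 0"
  shows "(D \<longlongrightarrow> 0) (at_left w)" "(D \<longlongrightarrow> 0) (at_right w)"
  using isCont_D[OF assms(1)] assms(2) by (simp_all add: isCont_def filterlim_at_split)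

lemma zero_between:
  assumes "0 < a" "a \<le> b" "D a * D b \<le> 0"
  shows "\<exists>z\<in>{a..b}. D z = 0"
proof -
  have cont: "continuous_on {a..b} D"
    by (rule continuous_on_subset[OF continuous_on_D]) (use assms(1) in auto)
  have "D a \<le> 0 \<and> 0 \<le> D b \<or> D b \<le> 0 \<and> 0 \<le> D a"
    using assms(3) by (auto simp: mult_le_0_iff)
  then show ?thesis
    using IVT'[of D a 0 b, OF _ _ assms(2) cont] IVT2'[of D b 0 a, OF _ _ assms(2) cont] by force
qed

lemma same_sign_if_no_zero:
  assumes "0 < a" "a \<le> b" "\<And>z. z \<in> {a..b} \<Longrightarrow> D z \<noteq> 0"
  shows "0 < D a * D b"
  using zero_between[OF assms(1,2)] assms(3) by force

lemma compact_zeros: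
  assumes "0 < a"
  shows "compact {z \<in> {a..b}. D z = 0}"
proof -
  have "continuous_on {a..b} D"
    by (rule continuous_on_subset[OF continuous_on_D]) (use assms in auto)
  then have "closed {z \<in> {a..b}. D z = 0}"
    by (rule continuous_closed_preimage_constant) simp
  moreover have "bounded {z \<in> {a..b}. D z = 0}"
    by (rule bounded_subset[of "{a..b}"]) auto
  ultimately show ?thesis
    by (simp add: compact_eq_bounded_closed)
qed

lemma last_zero_before:
  assumes "0 < u" "u \<le> x" "D u = 0" "D x \<noteq> 0"
  shows "\<exists>p. u \<le> p \<and> p < x \<and> D p = 0 \<and> (\<forall>z\<in>{p<..x}. D z \<noteq> 0)"
proof -
  obtain p where p: "p \<in> {u..x}" "D p = 0" "\<And>z. z \<in> {u..x} \<Longrightarrow> D z = 0 \<Longrightarrow> z \<le> p"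
    using compact_attains_sup[OF compact_zeros[OF assms(1)], of x] assms(2,3) by force
  moreover have "D z \<noteq> 0" if "z \<in> {p<..x}" for z
    using p(1) p(3)[of z] that by force
  moreover have "p \<noteq> x"
    using p(2) assms(4) by auto
  ultimately show ?thesis
    by (intro exI[of _ p]) auto
qed

lemma first_zero_after:
  assumes "0 < x" "x \<le> v" "D v = 0" "D x \<noteq> 0"
  shows "\<exists>q. x < q \<and> q \<le> v \<and> D q = 0 \<and> (\<forall>z\<in>{x..<q}. D z \<noteq> 0)"
proof -
  obtain q where q: "q \<in> {x..v}" "D q = 0" "\<And>z. z \<in> {x..v} \<Longrightarrow> D z = 0 \<Longrightarrow> q \<le> z"
    using compact_attains_inf[OF compact_zeros[OF assms(1)], of v] assms(2,3) by force
  moreover have "D z \<noteq> 0" if "z \<in> {x..<q}" for z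
    using q(1) q(3)[of z] that by force
  moreover have "q \<noteq> x"
    using q(2) assms(4) by auto
  ultimately show ?thesis
    by (intro exI[of _ q]) auto
qed

lemma D_chord_where_f_affine:
  assumes "0 < u" "u < x" "x < v" "\<And>y. y \<in> {u, x, v} \<Longrightarrow> f y = a * y + b"
  shows "(v - x) * D u + (x - u) * D v \<le> D x * (v - u)"
proof -
  have "g x * (v - u) \<le> (v - x) * g u + (x - u) * g v"
    using assms(1-3) by (intro convex_on_chord[OF convex_g]) auto
  moreover have "f x * (v - u) = (v - x) * f u + (x - u) * f v"
    using assms(4) by (simp add: algebra_simps)
  ultimately show ?thesis
    by (simp add: D_def algebra_simps)
qed

lemma D_nonneg_where_f_affine:
  assumes "0 \<le> p" "x \<in> {p<..<q}" "\<And>y. y \<in> {p<..<q} \<Longrightarrow> f y = a * y + b"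
    and left: "(D \<longlongrightarrow> 0) (at_right p)" and right: "(D \<longlongrightarrow> 0) (at_left q)"
  shows "0 \<le> D x"
proof -
  have x: "p < x" "x < q"
    using assms(2) by auto
  \<comment> \<open>Letting the ends of a chord through \<open>x\<close> tend to \<open>p\<close> and \<open>q\<close>, concavity of \<open>D\<close> gives the claim.\<close>
  have left_limit: "(x - p) * D v \<le> D x * (v - p)" if v: "x < v" "v < q" for v
  proof (rule tendsto_le[OF trivial_limit_at_right_real])
    show "((\<lambda>u. D x * (v - u)) \<longlongrightarrow> D x * (v - p)) (at_right p)"
      by (intro tendsto_intros)
    have "((\<lambda>u. (v - x) * D u + (x - u) * D v) \<longlongrightarrow> (v - x) * 0 + (x - p) * D v) (at_right p)"
      by (intro tendsto_intros left)
    then show "((\<lambda>u. (v - x) * D u + (x - u) * D v) \<longlongrightarrow> (x - p) * D v) (at_right p)"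
      by simp
    show "eventually (\<lambda>u. (v - x) * D u + (x - u) * D v \<le> D x * (v - u)) (at_right p)"
      using eventually_at_right_real[OF x(1)]
    proof eventually_elim
      case (elim u)
      then show ?case
        using v assms(1,3) by (intro D_chord_where_f_affine[of u x v a b]) auto
    qed
  qed
  have "(x - p) * 0 \<le> D x * (q - p)"
  proof (rule tendsto_le[OF trivial_limit_at_left_real])
    show "((\<lambda>v. D x * (v - p)) \<longlongrightarrow> D x * (q - p)) (at_left q)"
      by (intro tendsto_intros)
    show "((\<lambda>v. (x - p) * D v) \<longlongrightarrow> (x - p) * 0) (at_left q)"
      by (intro tendsto_intros right)
    show "eventually (\<lambda>v. (x - p) * D v \<le> D x * (v - p)) (at_left q)"
      using eventually_at_left_real[OF x(2)] by eventually_elim (simp add: left_limit)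
  qed
  then show ?thesis
    using x by (simp add: zero_le_mult_iff)
qed

lemma hsupp_f_meets_negative_interval:
  assumes "0 \<le> p" "p < q" "\<And>z. z \<in> {p<..<q} \<Longrightarrow> D z < 0"
    and "(D \<longlongrightarrow> 0) (at_right p)" "(D \<longlongrightarrow> 0) (at_left q)"
  shows "\<exists>s\<in>hsupp f. p < s \<and> s < q"
proof (rule ccontr)
  assume "\<not> ?thesis"
  then have "{p<..<q} \<inter> hsupp f = {}"
    by auto
  moreover have "{p<..<q} \<subseteq> {0<..}"
    using assms(1) by auto
  ultimately obtain a b where f_affine: "\<forall>y\<in>{p<..<q}. f y = a * y + b"
    using affine_on_connected_outside_hsupp[of "{p<..<q}" f] by auto
  define x where "x = (p + q) / 2"
  have x: "x \<in> {p<..<q}"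
    using assms(2) by (simp add: x_def)
  have "0 \<le> D x"
    by (rule D_nonneg_where_f_affine[OF assms(1) x _ assms(4,5)]) (use f_affine in blast)
  then show False
    using assms(3)[OF x] by simp
qed

lemma hsupp_f_meets_negative_ray:
  assumes "0 \<le> p" "\<And>z. p < z \<Longrightarrow> D z < 0" and left: "(D \<longlongrightarrow> 0) (at_right p)"
  shows "\<exists>s\<in>hsupp f. p < s"
proof (rule ccontr)
  assume "\<not> ?thesis"
  then have "{p<..} \<inter> hsupp f = {}"
    by auto
  moreover have "{p<..} \<subseteq> {0<..}"
    using assms(1) by auto
  ultimately obtain a b where f_affine: "\<forall>y\<in>{p<..}. f y = a * y + b"
    using affine_on_connected_outside_hsupp[of "{p<..}" f] by auto
  have "0 \<le> a * y + b" if "p < y" for y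
    using f_affine bounds_f[of y] that assms(1) by simp
  then have "0 \<le> a"
    by (rule slope_nonneg_if_affine_nonneg_on_ray)
  \<comment> \<open>\<open>f\<close> is nondecreasing and \<open>g\<close> nonincreasing beyond \<open>p\<close>, so \<open>D\<close> cannot drop below its limit \<open>0\<close> at \<open>p\<close>.\<close>
  define x where "x = p + 1"
  have "D y \<le> D x" if "p < y" "y < x" for y
  proof -
    have "a * y \<le> a * x"
      using \<open>0 \<le> a\<close> that by (intro mult_left_mono) auto
    then have "f y \<le> f x"
      using f_affine that by simp
    moreover have "g x \<le> g y"
      using bounds_g that assms(1) by (intro convex_on_bounded_above_antimono[OF convex_g, of 1]) auto
    ultimately show ?thesis
      by (simp add: D_def)
  qed
  then have "0 \<le> D x"
    using eventually_at_right_real[of p x]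
    by (intro tendsto_upperbound[OF left]) (auto simp: x_def elim: eventually_mono)
  then show False
    using assms(2)[of x] by (simp add: x_def)
qed


lemma negative_if_no_zero:
  assumes "0 < a" "a \<le> b" "\<And>z. z \<in> {a..b} \<Longrightarrow> D z \<noteq> 0"
  shows "D a < 0 \<longleftrightarrow> D b < 0"
  using same_sign_if_no_zero[OF assms] by (auto simp: zero_less_mult_iff)

lemma negative_left_end:
  assumes "0 < x" "D x < 0"
  shows "\<exists>p. 0 \<le> p \<and> p < x \<and> (\<forall>z\<in>{p<..x}. D z < 0) \<and> (D \<longlongrightarrow> 0) (at_right p)"
proof (cases "\<exists>u\<in>{0<..<x}. D u = 0")
  case True
  then obtain u where "0 < u" "u < x" "D u = 0"
    by auto
  then obtain p where p: "u \<le> p" "p < x" "D p = 0" "\<forall>z\<in>{p<..x}. D z \<noteq> 0"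
    using last_zero_before[of u x] assms by auto
  have "D z < 0" if "z \<in> {p<..x}" for z
    using negative_if_no_zero[of z x] that p(1,4) \<open>0 < u\<close> assms(2) by auto
  then show ?thesis
    using p(1-3) \<open>0 < u\<close> D_tendsto_at_root(2)[of p] by (intro exI[of _ p]) auto
next
  case False
  have "D z < 0" if "z \<in> {0<..x}" for z
  proof -
    have "D w \<noteq> 0" if "w \<in> {z..x}" for w
      using False \<open>z \<in> {0<..x}\<close> that assms(2) by (cases "w = x") auto
    then show ?thesis
      using negative_if_no_zero[of z x] \<open>z \<in> {0<..x}\<close> assms(2) by auto
  qed
  then show ?thesis
    using assms D_tendsto_at_right_0 by (intro exI[of _ 0]) auto
qed

lemma hsupp_f_meets_Xset:
  assumes "0 < x" "D x < 0"
  shows "\<exists>s\<in>hsupp f. D s < 0"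
proof -
  obtain p where p: "0 \<le> p" "p < x" "\<forall>z\<in>{p<..x}. D z < 0" "(D \<longlongrightarrow> 0) (at_right p)"
    using negative_left_end[OF assms] by blast
  show ?thesis
  proof (cases "\<exists>v>x. D v = 0")
    case True
    then obtain v where "x < v" "D v = 0"
      by auto
    then obtain q where q: "x < q" "D q = 0" "\<forall>z\<in>{x..<q}. D z \<noteq> 0"
      using first_zero_after[of x v] assms by auto
    have neg: "D z < 0" if "z \<in> {p<..<q}" for z
      using p(3) negative_if_no_zero[of x z] that q(3) assms by (cases "z \<le> x") auto
    then obtain s where "s \<in> hsupp f" "p < s" "s < q"
      using hsupp_f_meets_negative_interval[OF p(1) _ _ p(4) D_tendsto_at_root(1)[of q]] p(2) q(1,2) assms(1)
      by auto
    then show ?thesis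
      using neg by auto
  next
    case False
    have "D z < 0" if "p < z" for z
    proof (cases "z \<le> x")
      case False
      have "D w \<noteq> 0" if "w \<in> {x..z}" for w
        using \<open>\<not> (\<exists>v>x. D v = 0)\<close> that assms(2) by (cases "w = x") auto
      then show ?thesis
        using negative_if_no_zero[of x z] False assms by auto
    qed (use p(3) that in auto)
    then show ?thesis
      using hsupp_f_meets_negative_ray[OF p(1) _ p(4)] by auto
  qed
qed

lemma D_chord_where_g_affine:
  assumes "0 < u" "u < w" "w < v" "\<And>y. y \<in> {u, w, v} \<Longrightarrow> g y = a * y + b"
  shows "D w * (v - u) \<le> (v - w) * D u + (w - u) * D v"
proof -
  have "f w * (v - u) \<le> (v - w) * f u + (w - u) * f v"
    using assms(1-3) by (intro convex_on_chord[OF convex_f]) auto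
  moreover have "g w * (v - u) = (v - w) * g u + (w - u) * g v"
    using assms(4) by (simp add: algebra_simps)
  ultimately show ?thesis
    by (simp add: D_def algebra_simps)
qed

lemma zero_near_Xset_near_Yset:
  assumes "0 < w" "D w = 0" "w \<notin> hsupp g" "w \<in> closure (Xset f g)"
  shows "w \<in> closure (Xset g f)"
  unfolding closure_approachable
proof (intro allI impI)
  fix e :: real
  assume "0 < e"
  obtain d a b where d: "0 < d" "\<forall>y. \<bar>y - w\<bar> < d \<longrightarrow> 0 < y \<and> g y = a * y + b"
    using locally_affine_outside_hsupp[OF assms(1,3)] by blast
  have "0 < min d e"
    using d(1) \<open>0 < e\<close> by simp
  then obtain x where x: "x \<in> Xset f g" "dist x w < min d e"
    using assms(4) unfolding closure_approachable by blast
  \<comment> \<open>\<open>D\<close> is convex near \<open>w\<close> and vanishes there, so the reflection of \<open>x\<close> in \<open>w\<close> lies in \<open>Xset g f\<close>.\<close>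
  define y where "y = 2 * w - x"
  have xy: "0 < x" "D x < 0" "\<bar>x - w\<bar> < d" "\<bar>y - w\<bar> < d" "dist y w < e" "x \<noteq> w"
    using x assms(2) by (auto simp: Xset_iff dist_real_def y_def)
  then have "0 < y" and g_affine: "\<And>z. z \<in> {x, w, y} \<Longrightarrow> g z = a * z + b"
    using d(2) by auto
  have "0 \<le> \<bar>x - w\<bar> * (D x + D y)"
  proof (cases "x < w")
    case True
    then have "D w * (y - x) \<le> (y - w) * D x + (w - x) * D y"
      using g_affine xy(1) by (intro D_chord_where_g_affine) (auto simp: y_def)
    then show ?thesis
      using True assms(2) by (simp add: y_def algebra_simps)
  next
    case False
    then have "D w * (x - y) \<le> (x - w) * D y + (w - y) * D x"
      using g_affine \<open>0 < y\<close> xy(6) by (intro D_chord_where_g_affine) (auto simp: y_def)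
    then show ?thesis
      using False assms(2) by (simp add: y_def algebra_simps)
  qed
  then have "0 < D y"
    using xy(2,6) by (simp add: zero_le_mult_iff)
  then show "\<exists>y'\<in>Xset g f. dist y' w < e"
    using \<open>0 < y\<close> xy(5) by (auto simp: Yset_iff)
qed

lemma links_if_opposite_signs:
  assumes "a \<in> S" "b \<in> S" "S \<subseteq> {0<..}" "0 < c" "D (c * a) * D (c * b) < 0"
  shows "links S (Xset f g) (Xset g f)"
proof -
  have "0 < c * a" "0 < c * b"
    using assms by auto
  then have "c * a \<in> Xset f g \<and> c * b \<in> Xset g f \<or> c * b \<in> Xset f g \<and> c * a \<in> Xset g f"
    using assms(5) by (auto simp: Xset_iff Yset_iff mult_less_0_iff)
  then show ?thesis
    unfolding links_def using assms(1,2,4) by blast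
qed

lemma swap_sign_invariant: "swap.sign_invariant = sign_invariant"
  by (auto simp: fun_eq_iff sign_invariant_def swap.sign_invariant_def swap_D sgn_minus)

lemma swap_sign_component: "swap.sign_component \<sigma> p q = sign_component (- \<sigma>) p q"
  unfolding sign_component_def swap.sign_component_def by (auto simp: swap_D sgn_minus)

lemma sign_invariant_mult: "sign_invariant l \<Longrightarrow> sign_invariant k \<Longrightarrow> sign_invariant (l * k)"
  unfolding sign_invariant_def by (simp add: mult.assoc)

lemma sign_invariant_inverse:
  assumes "sign_invariant l"
  shows "sign_invariant (1 / l)"
proof -
  have l: "0 < l" "\<And>y. 0 < y \<Longrightarrow> sgn (D (l * y)) = sgn (D y)"
    using assms by (auto simp: sign_invariant_def)
  have "sgn (D (1 / l * x)) = sgn (D x)" if "0 < x" for x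
    using l(2)[of "x / l"] l(1) that by simp
  then show ?thesis
    using l(1) by (simp add: sign_invariant_def)
qed

lemma sign_invariant_power:
  assumes "sign_invariant l"
  shows "sign_invariant (l ^ n)"
proof (induction n)
  case 0
  then show ?case
    by (simp add: sign_invariant_def)
next
  case (Suc n)
  then show ?case
    using sign_invariant_mult[OF assms] by simp
qed

lemma sign_invariant_scale_component:
  assumes "sign_invariant l" "sign_component \<sigma> p q"
  shows "sign_component \<sigma> (l * p) (l * q)"
proof -
  have l: "0 < l" "\<And>x. 0 < x \<Longrightarrow> sgn (D (l * x)) = sgn (D x)"
    using assms(1) by (auto simp: sign_invariant_def)
  have "sgn (D z) = \<sigma>" if "z \<in> {l * p<..<l * q}" for z
  proof -
    have "z / l \<in> {p<..<q}"
      using that l(1) by (auto simp: field_simps)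
    then show ?thesis
      using assms(2) l l(2)[of "z / l"] by (auto simp: sign_component_def)
  qed
  moreover have "D (l * p) = 0" "D (l * q) = 0"
    using assms(2) l(2)[of p] l(2)[of q] by (auto simp: sign_component_def sgn_0_0)
  ultimately show ?thesis
    using assms(2) l(1) by (auto simp: sign_component_def)
qed

lemma sign_invariant_fixes_component:
  assumes "sign_invariant k" "sign_component \<sigma> p q" "u \<in> {p<..<q}" "k * u \<in> {p<..<q}"
  shows "k = 1"
proof -
  have k: "0 < k" "\<And>x. 0 < x \<Longrightarrow> sgn (D (k * x)) = sgn (D x)"
    using assms(1) by (auto simp: sign_invariant_def)
  have pq: "0 < p" "D p = 0" "D q = 0" "\<And>z. z \<in> {p<..<q} \<Longrightarrow> D z \<noteq> 0"
    using assms(2) by (auto simp: sign_component_def sgn_0_0)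
  \<comment> \<open>Otherwise \<open>q / k\<close> or \<open>p / k\<close> would be a zero of \<open>D\<close> strictly inside the component.\<close>
  have "D (z / k) = 0" if "D z = 0" "0 < z" for z
    using k(2)[of "z / k"] that k(1) by (simp add: sgn_0_0)
  then have "D (q / k) = 0" "D (p / k) = 0"
    using pq assms(2) by (auto simp: sign_component_def)
  moreover have "q / k \<in> {p<..<q}" if "1 < k"
  proof -
    have "k * p < k * u"
      using assms(3) k(1) by (intro mult_strict_left_mono) auto
    moreover have "k * u < q" "0 < q"
      using assms(4) pq(1) by auto
    ultimately have "k * p < q" "1 * q < k * q"
      using that by (linarith, intro mult_strict_right_mono)
    then show ?thesis
      using assms(4) k(1) by (auto simp: field_simps)
  qed
  moreover have "p / k \<in> {p<..<q}" if "k < 1"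
  proof -
    have "k * u < k * q" "p < k * u"
      using assms(3,4) k(1) by (auto intro: mult_strict_left_mono)
    then have "p < k * q" "k * p < 1 * p"
      using pq(1) that by (auto intro: mult_strict_right_mono)
    then show ?thesis
      using assms(4) k(1) by (auto simp: field_simps)
  qed
  ultimately show ?thesis
    using pq(4) by (meson linorder_neqE_linordered_idom)
qed

lemma hsupp_f_meets_negative_component:
  assumes "sign_component (- 1) p q"
  shows "\<exists>s\<in>hsupp f. s \<in> {p<..<q}"
  using assms hsupp_f_meets_negative_interval[of p q] D_tendsto_at_root[of p] D_tendsto_at_root[of q]
  by (auto simp: sign_component_def sgn_1_neg)


lemma sign_persists:
  assumes "0 < x" "D x \<noteq> 0"
  shows "\<exists>\<delta>>0. \<forall>y. \<bar>y - x\<bar> < \<delta> \<longrightarrow> 0 < D y * D x"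
proof -
  have square: "0 < D x * D x"
    using assms(2) not_real_square_gt_zero by blast
  have "((\<lambda>y. D y * D x) \<longlongrightarrow> D x * D x) (at x)"
    using isCont_D[OF assms(1)] by (intro tendsto_intros) (simp add: isCont_def)
  then have "eventually (\<lambda>y. 0 < D y * D x) (at x)"
    using square by (rule order_tendstoD)
  then obtain \<delta> where \<delta>: "0 < \<delta>" "\<And>y. y \<noteq> x \<Longrightarrow> dist y x < \<delta> \<Longrightarrow> 0 < D y * D x"
    unfolding eventually_at by auto
  have "0 < D y * D x" if "\<bar>y - x\<bar> < \<delta>" for y
    using \<delta>(2)[of y] that square by (cases "y = x") (auto simp: dist_real_def)
  then show ?thesis
    using \<delta>(1) by blast
qed

lemma D_secant_through_zero:
  assumes "0 < a" "a < z" "z < b" "D z = 0"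
    and "{a<..<b} \<inter> hsupp f = {}" "{a<..<b} \<inter> hsupp g = {}"
  shows "D b * (a - z) = D a * (b - z)"
proof -
  have ab: "{a<..<b} \<subseteq> {0<..}"
    using assms(1) by auto
  obtain m1 c1 where f_affine: "\<forall>x\<in>{a<..<b}. f x = m1 * x + c1"
    using affine_on_connected_outside_hsupp[OF connected_Ioo open_greaterThanLessThan ab assms(5)] by blast
  obtain m2 c2 where g_affine: "\<forall>x\<in>{a<..<b}. g x = m2 * x + c2"
    using affine_on_connected_outside_hsupp[OF connected_Ioo open_greaterThanLessThan ab assms(6)] by blast
  have cont: "continuous_on {a..b} D"
    by (rule continuous_on_subset[OF continuous_on_D]) (use assms(1) in auto)
  have D_affine: "D x = (m1 - m2) * x + (c1 - c2)" if "x \<in> {a..b}" for x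
  proof (rule affine_on_closed_interval[OF _ cont _ that])
    show "a < b"
      using assms(2,3) by simp
    show "D y = (m1 - m2) * y + (c1 - c2)" if "y \<in> {a<..<b}" for y
      using f_affine g_affine that by (simp add: D_def algebra_simps)
  qed
  have "c1 - c2 = - ((m1 - m2) * z)"
    using D_affine[of z] assms(2-4) by simp
  then have "D b = (m1 - m2) * (b - z)" "D a = (m1 - m2) * (a - z)"
    using D_affine[of a] D_affine[of b] assms(2,3) by (simp_all add: algebra_simps)
  then show ?thesis
    by simp
qed

lemma no_geometric_scaling:
  assumes "1 < r" "0 < s" "D s \<noteq> 0" "0 < A"
    and up: "\<And>n. D (r ^ n * s) = A ^ n * D s" and down: "\<And>n. D ((1 / r) ^ n * s) = (1 / A) ^ n * D s"
  shows False
proof (cases "1 < A")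
  case True
  then obtain n where "1 / \<bar>D s\<bar> < A ^ n"
    using real_arch_pow by blast
  then have "1 < A ^ n * \<bar>D s\<bar>"
    using assms(3) by (simp add: field_simps)
  moreover have "\<bar>D (r ^ n * s)\<bar> \<le> 1"
    using assms(1,2) by (intro abs_D_le) simp
  ultimately show False
    using up[of n] assms(4) by (simp add: abs_mult)
next
  case False
  \<comment> \<open>Then \<open>\<bar>D\<bar>\<close> stays above \<open>\<bar>D s\<bar>\<close> along \<open>(1 / r) ^ n * s \<longrightarrow> 0\<close>, contradicting \<open>\<bar>D x\<bar> \<le> x\<close>.\<close>
  obtain n where n: "(1 / r) ^ n < \<bar>D s\<bar> / s"
    using real_arch_pow_inv[of "\<bar>D s\<bar> / s" "1 / r"] assms(1-3) by auto
  have "1 \<le> (1 / A) ^ n"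
    using False assms(4) by (intro one_le_power) simp
  then have "1 * \<bar>D s\<bar> \<le> (1 / A) ^ n * \<bar>D s\<bar>"
    by (intro mult_right_mono) auto
  then have "\<bar>D s\<bar> \<le> (1 / A) ^ n * \<bar>D s\<bar>"
    by simp
  also have "\<dots> = \<bar>D ((1 / r) ^ n * s)\<bar>"
    using down[of n] assms(4) by (simp add: abs_mult)
  also have "\<dots> \<le> (1 / r) ^ n * s"
    using assms(1,2) by (intro abs_D_le) simp
  also have "\<dots> < \<bar>D s\<bar>"
    using n assms(2) by (simp add: field_simps)
  finally show False
    by simp
qed

end


section \<open>Curves whose kinks link neither sign set\<close>

locale unlinked_pair = hockey_pair +
  assumes hsupp_f_nontrivial: "\<exists>a b. a \<in> hsupp f \<and> b \<in> hsupp f \<and> a \<noteq> b"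
    and hsupp_g_nontrivial: "\<exists>a b. a \<in> hsupp g \<and> b \<in> hsupp g \<and> a \<noteq> b"
    and not_links_f: "\<not> links (hsupp f) (Xset f g) (Xset g f)"
    and not_links_g: "\<not> links (hsupp g) (Xset f g) (Xset g f)"
    and Xset_nonempty: "Xset f g \<noteq> {}" and Yset_nonempty: "Xset g f \<noteq> {}"
begin

sublocale swap: unlinked_pair g f
  using hsupp_f_nontrivial hsupp_g_nontrivial not_links_f not_links_g Xset_nonempty Yset_nonempty
  by unfold_locales (auto simp: links_commute)

end

(* Facts of this locale become available for the swapped pair (prefix swap) only in later context
   blocks, hence the splitting below. *)

context unlinked_pair
begin

lemma hsupp_f_apart_from_Yset:
  assumes "s \<in> hsupp f"
  shows "s \<notin> closure (Xset g f)"
proof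
  assume near: "s \<in> closure (Xset g f)"
  obtain x where "0 < x" "D x < 0"
    using Xset_nonempty by (auto simp: Xset_iff)
  then obtain s1 where s1: "s1 \<in> hsupp f" "D s1 < 0"
    using hsupp_f_meets_Xset by blast
  have "links (hsupp f) (Xset f g) (Xset g f)"
  proof (rule links_if_near[OF s1(1) assms])
    show "0 < s1" "0 < s"
      using s1(1) assms hsupp_subset by auto
    show "s1 \<in> Xset f g"
      using s1 \<open>0 < s1\<close> by (simp add: Xset_iff)
    show "Xset g f \<subseteq> {0<..}"
      by (auto simp: Yset_iff)
  qed (fact open_Xset near)+
  then show False
    using not_links_f by blast
qed

end

context unlinked_pair
begin

lemma zero_crossing_if_near_Xset:
  assumes "0 < w" "D w = 0" "w \<in> closure (Xset f g)"
  shows "\<exists>d>0. \<exists>m. m \<noteq> 0 \<and> (\<forall>x. \<bar>x - w\<bar> < d \<longrightarrow> D x = m * (x - w))"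
proof -
  have "w \<notin> hsupp g"
    using swap.hsupp_f_apart_from_Yset assms(3) by blast
  then have "w \<in> closure (Xset g f)"
    using zero_near_Xset_near_Yset assms by blast
  then have "w \<notin> hsupp f"
    using hsupp_f_apart_from_Yset by blast
  obtain d1 a1 b1 where d1: "0 < d1" "\<forall>y. \<bar>y - w\<bar> < d1 \<longrightarrow> 0 < y \<and> f y = a1 * y + b1"
    using locally_affine_outside_hsupp[OF assms(1) \<open>w \<notin> hsupp f\<close>] by blast
  obtain d2 a2 b2 where d2: "0 < d2" "\<forall>y. \<bar>y - w\<bar> < d2 \<longrightarrow> 0 < y \<and> g y = a2 * y + b2"
    using locally_affine_outside_hsupp[OF assms(1) \<open>w \<notin> hsupp g\<close>] by blast
  define d where "d = min d1 d2"
  have D_line: "D x = (a1 - a2) * (x - w)" if "\<bar>x - w\<bar> < d" for x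
  proof -
    have "D x = (a1 - a2) * x + (b1 - b2)" "D w = (a1 - a2) * w + (b1 - b2)"
      using d1 d2 that by (auto simp: d_def D_def algebra_simps)
    then show ?thesis
      using assms(2) by (simp add: algebra_simps)
  qed
  moreover have "a1 - a2 \<noteq> 0"
  proof
    assume "a1 - a2 = 0"
    have "0 < d"
      using d1(1) d2(1) by (simp add: d_def)
    then obtain x where "x \<in> Xset f g" "dist x w < d"
      using assms(3) unfolding closure_approachable by blast
    then show False
      using D_line[of x] \<open>a1 - a2 = 0\<close> by (simp add: Xset_iff dist_real_def)
  qed
  ultimately show ?thesis
    using d1(1) d2(1) unfolding d_def by (intro exI[of _ "min d1 d2"] conjI exI[of _ "a1 - a2"]) auto
qed

end

context unlinked_pair
begin

lemma zero_crossing_or_flat: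
  assumes "0 < w" "D w = 0"
  shows "(\<exists>d>0. \<exists>m. m \<noteq> 0 \<and> (\<forall>x. \<bar>x - w\<bar> < d \<longrightarrow> D x = m * (x - w)))
    \<or> eventually (\<lambda>x. D x = 0) (nhds w)"
proof (cases "w \<in> closure (Xset f g) \<union> closure (Xset g f)")
  case True
  then show ?thesis
  proof
    assume "w \<in> closure (Xset g f)"
    then obtain d m where "0 < d" "m \<noteq> 0" "\<forall>x. \<bar>x - w\<bar> < d \<longrightarrow> - D x = m * (x - w)"
      using swap.zero_crossing_if_near_Xset[of w] assms by (auto simp: swap_D)
    then show ?thesis
      by (intro disjI1 exI[of _ d] conjI exI[of _ "- m"]) auto
  qed (use zero_crossing_if_near_Xset[OF assms] in blast)
next
  case False
  then have "open (- closure (Xset f g \<union> Xset g f) \<inter> {0<..})" "w \<in> - closure (Xset f g \<union> Xset g f) \<inter> {0<..}"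
    using assms(1) by (auto simp: closure_Un intro!: open_Int)
  then have "eventually (\<lambda>x. x \<in> - closure (Xset f g \<union> Xset g f) \<inter> {0<..}) (nhds w)"
    by (rule eventually_nhds_in_open)
  then have "eventually (\<lambda>x. D x = 0) (nhds w)"
  proof eventually_elim
    case (elim x)
    then have "x \<notin> Xset f g" "x \<notin> Xset g f" "0 < x"
      using closure_subset[of "Xset f g \<union> Xset g f"] by auto
    then show ?case
      by (auto simp: Xset_iff Yset_iff)
  qed
  then show ?thesis
    by blast
qed

lemma nonzero_near_or_flat:
  assumes "0 < w"
  shows "eventually (\<lambda>x. D x \<noteq> 0) (at w) \<or> eventually (\<lambda>x. D x = 0) (nhds w)"
proof (cases "D w = 0")
  case True
  then consider d m where "0 < d" "m \<noteq> 0" "\<forall>x. \<bar>x - w\<bar> < d \<longrightarrow> D x = m * (x - w)"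
    | "eventually (\<lambda>x. D x = 0) (nhds w)"
    using zero_crossing_or_flat[OF assms] by blast
  then show ?thesis
  proof cases
    case 1
    then have "\<forall>x\<in>UNIV. x \<noteq> w \<and> dist x w < d \<longrightarrow> D x \<noteq> 0"
      by (simp add: dist_real_def)
    then show ?thesis
      unfolding eventually_at using \<open>0 < d\<close> by blast
  qed simp
next
  case False
  then show ?thesis
    using assms isCont_D[of w] by (intro disjI1 tendsto_imp_eventually_ne) (auto simp: isCont_def)
qed

lemma not_flat:
  assumes "0 < w"
  shows "\<not> eventually (\<lambda>x. D x = 0) (nhds w)"
proof -
  define flat where "flat = {w. eventually (\<lambda>x. D x = 0) (nhds w)}"
  define regular where "regular = {w. eventually (\<lambda>x. D x \<noteq> 0) (at w)}"
  have cover: "{0<..} \<subseteq> flat \<union> regular"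
    using nonzero_near_or_flat by (auto simp: flat_def regular_def)
  have disjoint: "flat \<inter> regular \<inter> {0<..} = {}"
  proof -
    have False if "w \<in> flat" "w \<in> regular" for w
    proof -
      have "eventually (\<lambda>x. D x = 0) (at w)" "eventually (\<lambda>x. D x \<noteq> 0) (at w)"
        using that unfolding flat_def regular_def eventually_nhds_conv_at by auto
      then have "eventually (\<lambda>x. False) (at w)"
        by eventually_elim simp
      then show False
        by simp
    qed
    then show ?thesis
      by auto
  qed
  obtain x where "0 < x" "D x < 0"
    using Xset_nonempty by (auto simp: Xset_iff)
  then have "x \<in> regular \<inter> {0<..}"
    using nonzero_near_or_flat[of x] by (auto simp: regular_def eventually_nhds_conv_at)
  moreover have "open flat" "open regular"
    unfolding flat_def regular_def by (rule open_eventually_nhds open_eventually_at)+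
  then have "flat \<inter> {0<..} = {} \<or> regular \<inter> {0<..} = {}"
    using connectedD[OF connected_Ioi _ _ disjoint cover] by blast
  ultimately show ?thesis
    using assms by (auto simp: flat_def)
qed

lemma zero_crossing:
  assumes "0 < w" "D w = 0"
  shows "\<exists>d>0. \<exists>m. m \<noteq> 0 \<and> (\<forall>x. \<bar>x - w\<bar> < d \<longrightarrow> D x = m * (x - w))"
  using zero_crossing_or_flat[OF assms] not_flat[OF assms(1)] by blast

lemma zero_sign_change:
  assumes "0 < w" "D w = 0"
  shows "\<exists>d>0. d \<le> w \<and> (\<forall>x y. w - d < x \<longrightarrow> x < w \<longrightarrow> w < y \<longrightarrow> y < w + d \<longrightarrow> D x * D y < 0)"
proof -
  obtain d m where d: "0 < d" "m \<noteq> 0" "\<forall>x. \<bar>x - w\<bar> < d \<longrightarrow> D x = m * (x - w)"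
    using zero_crossing[OF assms] by blast
  have "D x * D y < 0" if "w - min d w < x" "x < w" "w < y" "y < w + min d w" for x y
  proof -
    have Dxy: "D x = m * (x - w)" "D y = m * (y - w)"
      using d(3) that by auto
    have "D x * D y = (m * m) * ((x - w) * (y - w))"
      unfolding Dxy by (simp add: mult_ac)
    moreover have "0 < m * m"
      using d(2) not_real_square_gt_zero by blast
    moreover have "(x - w) * (y - w) < 0"
      using that by (simp add: mult_neg_pos)
    ultimately show ?thesis
      by (simp add: mult_pos_neg)
  qed
  then show ?thesis
    using d(1) assms(1) by (intro exI[of _ "min d w"]) auto
qed

lemma zero_near_Yset:
  assumes "0 < w" "D w = 0"
  shows "w \<in> closure (Xset g f)"
  unfolding closure_approachable
proof (intro allI impI)
  fix e :: real
  assume "0 < e"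
  obtain d where d: "0 < d" "d \<le> w" "\<forall>x y. w - d < x \<longrightarrow> x < w \<longrightarrow> w < y \<longrightarrow> y < w + d \<longrightarrow> D x * D y < 0"
    using zero_sign_change[OF assms] by blast
  define k where "k = min d e / 2"
  have k: "0 < k" "k < d" "k < e"
    using d(1) \<open>0 < e\<close> by (auto simp: k_def)
  then have "D (w - k) * D (w + k) < 0"
    using d(3) by simp
  then have "w - k \<in> Xset g f \<or> w + k \<in> Xset g f"
    using k d(2) assms(1) by (auto simp: Yset_iff mult_less_0_iff)
  moreover have "dist (w - k) w < e" "dist (w + k) w < e"
    using k by (simp_all add: dist_real_def)
  ultimately show "\<exists>y\<in>Xset g f. dist y w < e"
    by blast
qed

lemma D_neg_on_hsupp_f:
  assumes "s \<in> hsupp f"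
  shows "D s < 0"
proof -
  have "0 < s" "s \<notin> closure (Xset g f)"
    using assms hsupp_subset hsupp_f_apart_from_Yset by auto
  moreover have "s \<notin> Xset g f"
    using \<open>s \<notin> closure (Xset g f)\<close> closure_subset by blast
  ultimately show ?thesis
    using zero_near_Yset[of s] by (auto simp: Yset_iff not_less order_le_less)
qed

lemma unlinked_no_opposite_signs:
  assumes "\<not> links S (Xset f g) (Xset g f)" "S \<subseteq> {0<..}" "a \<in> S" "b \<in> S" "0 < y"
  shows "\<not> D y * D (b / a * y) < 0"
proof
  assume "D y * D (b / a * y) < 0"
  moreover have "0 < a"
    using assms(2,3) by auto
  then have "y / a * a = y" "y / a * b = b / a * y"
    by auto
  ultimately have "links S (Xset f g) (Xset g f)"
    using links_if_opposite_signs[OF assms(3,4,2), of "y / a"] \<open>0 < a\<close> assms(5) by (simp add: ac_simps)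
  with assms(1) show False
    by blast
qed

lemma unlinked_scaling_preserves_sign:
  assumes "\<not> links S (Xset f g) (Xset g f)" "S \<subseteq> {0<..}" "a \<in> S" "b \<in> S" "0 < x" "D x \<noteq> 0"
  shows "0 < D x * D (b / a * x)"
proof -
  define \<rho> where "\<rho> = b / a"
  have "0 < a" "0 < b"
    using assms(2-4) by auto
  then have "0 < \<rho>"
    by (simp add: \<rho>_def)
  note no_opposite = unlinked_no_opposite_signs[OF assms(1-4), folded \<rho>_def]
  \<comment> \<open>A zero at \<open>\<rho> x\<close> would be a sign change, which scaling by \<open>1 / \<rho>\<close> carries next to \<open>x\<close>, where \<open>D\<close> has constant sign.\<close>
  have "D (\<rho> * x) \<noteq> 0"
  proof
    assume "D (\<rho> * x) = 0"
    then obtain d where d: "0 < d" "d \<le> \<rho> * x"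
        "\<forall>u v. \<rho> * x - d < u \<longrightarrow> u < \<rho> * x \<longrightarrow> \<rho> * x < v \<longrightarrow> v < \<rho> * x + d \<longrightarrow> D u * D v < 0"
      using zero_sign_change[of "\<rho> * x"] \<open>0 < \<rho>\<close> assms(5) by auto
    obtain \<delta> where \<delta>: "0 < \<delta>" "\<forall>y. \<bar>y - x\<bar> < \<delta> \<longrightarrow> 0 < D y * D x"
      using sign_persists[OF assms(5,6)] by blast
    define t where "t = min \<delta> (d / \<rho>) / 2"
    have t: "0 < t" "t < \<delta>" "\<rho> * t < d"
      using \<delta>(1) d(1) \<open>0 < \<rho>\<close> by (auto simp: t_def min_def field_simps)
    then have "t < x"
      using d(2) \<open>0 < \<rho>\<close> by (metis mult_less_cancel_left_pos order_less_le_trans)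
    have "D (\<rho> * (x - t)) * D (\<rho> * (x + t)) < 0"
      using d(3) t \<open>0 < \<rho>\<close> by (simp add: algebra_simps)
    moreover have "0 < D (x - t) * D x" "0 < D (x + t) * D x"
      using \<delta>(2) t by auto
    ultimately have "D (x - t) * D (\<rho> * (x - t)) < 0 \<or> D (x + t) * D (\<rho> * (x + t)) < 0"
      by (auto simp: zero_less_mult_iff mult_less_0_iff)
    then show False
      using no_opposite[of "x - t"] no_opposite[of "x + t"] t(1) \<open>t < x\<close> assms(5) by auto
  qed
  then show ?thesis
    using no_opposite[OF assms(5)] assms(6) by (simp add: \<rho>_def linorder_not_less order_le_less)
qed

lemma sign_invariant_ratio:
  assumes "\<not> links S (Xset f g) (Xset g f)" "S \<subseteq> {0<..}" "a \<in> S" "b \<in> S"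
  shows "sign_invariant (b / a)"
proof -
  have "0 < a" "0 < b"
    using assms(2-4) by auto
  have "sgn (D (b / a * x)) = sgn (D x)" if "0 < x" for x
  proof (cases "D x = 0")
    case False
    then show ?thesis
      using unlinked_scaling_preserves_sign[OF assms that False] by (auto simp: zero_less_mult_iff)
  next
    case True
    have "D (b / a * x) = 0"
    proof (rule ccontr)
      assume "D (b / a * x) \<noteq> 0"
      then have "0 < D (b / a * x) * D (a / b * (b / a * x))"
        using unlinked_scaling_preserves_sign[OF assms(1,2,4,3), of "b / a * x"] \<open>0 < a\<close> \<open>0 < b\<close> that
        by simp
      then show False
        using True \<open>0 < a\<close> \<open>0 < b\<close> by simp
    qed
    then show ?thesis
      using True by simp
  qed
  then show ?thesis
    using \<open>0 < a\<close> \<open>0 < b\<close> by (simp add: sign_invariant_def)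
qed

lemma sign_invariant_gt_one: "\<exists>r>1. sign_invariant r"
proof -
  obtain a b where ab: "a \<in> hsupp f" "b \<in> hsupp f" "a < b"
    using hsupp_f_nontrivial by (metis linorder_neqE_linordered_idom)
  then have "0 < a"
    using hsupp_subset by auto
  then have "1 < b / a"
    using ab(3) by simp
  then show ?thesis
    using sign_invariant_ratio[OF not_links_f hsupp_subset ab(1,2)] by blast
qed

lemma exists_opposite_sign:
  assumes "D x \<noteq> 0"
  shows "\<exists>y>0. D x * D y < 0"
proof (cases "D x < 0")
  case True
  then show ?thesis
    using Yset_nonempty by (force simp: Yset_iff mult_neg_pos)
next
  case False
  then show ?thesis
    using Xset_nonempty assms by (force simp: Xset_iff mult_pos_neg)
qed

lemma zeros_on_both_sides:
  assumes "0 < x" "D x \<noteq> 0"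
  shows "\<exists>u. 0 < u \<and> u < x \<and> D u = 0" "\<exists>v>x. D v = 0"
proof -
  obtain r where r: "1 < r" "sign_invariant r"
    using sign_invariant_gt_one by blast
  obtain y where y: "0 < y" "D x * D y < 0"
    using exists_opposite_sign[OF assms(2)] by blast
  \<comment> \<open>Scaling \<open>y\<close> by powers of \<open>r\<close> gives points of the opposite sign on both sides of \<open>x\<close>.\<close>
  have opposite: "D x * D (l * y) < 0" if "sign_invariant l" for l
  proof -
    have "sgn (D (l * y)) = sgn (D y)"
      using that y(1) by (simp add: sign_invariant_def)
    then have "sgn (D x * D (l * y)) = sgn (D x * D y)"
      by (simp add: sgn_mult)
    then show ?thesis
      using y(2) by (metis sgn_less)
  qed
  obtain n where "(1 / r) ^ n < x / y"
    using real_arch_pow_inv[of "x / y" "1 / r"] assms(1) y(1) r(1) by auto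
  then have below: "(1 / r) ^ n * y < x" "0 < (1 / r) ^ n * y"
    using y(1) r(1) by (simp_all add: field_simps)
  have "D ((1 / r) ^ n * y) * D x \<le> 0"
    using opposite[OF sign_invariant_power[OF sign_invariant_inverse[OF r(2)], of n]] by (simp add: mult.commute)
  then obtain u where "u \<in> {(1 / r) ^ n * y..x}" "D u = 0"
    using zero_between[of "(1 / r) ^ n * y" x] below by auto
  then show "\<exists>u. 0 < u \<and> u < x \<and> D u = 0"
    using below(2) assms(2) by (intro exI[of _ u]) (auto simp: order_le_less)
  obtain m where "x / y < r ^ m"
    using real_arch_pow[OF r(1)] by blast
  then have above: "x < r ^ m * y"
    using y(1) by (simp add: field_simps)
  have "D x * D (r ^ m * y) \<le> 0"
    using opposite[OF sign_invariant_power[OF r(2), of m]] by simp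
  then obtain v where "v \<in> {x..r ^ m * y}" "D v = 0"
    using zero_between[of x "r ^ m * y"] above assms(1) by auto
  then show "\<exists>v>x. D v = 0"
    using assms(2) by (intro exI[of _ v]) (auto simp: order_le_less)
qed

lemma sign_component_exists:
  assumes "0 < x" "D x \<noteq> 0"
  shows "\<exists>p q. x \<in> {p<..<q} \<and> sign_component (sgn (D x)) p q"
proof -
  obtain u v where uv: "0 < u" "u < x" "D u = 0" "x < v" "D v = 0"
    using zeros_on_both_sides[OF assms] by blast
  obtain p where p: "u \<le> p" "p < x" "D p = 0" "\<forall>z\<in>{p<..x}. D z \<noteq> 0"
    using last_zero_before[OF uv(1) less_imp_le[OF uv(2)] uv(3) assms(2)] by blast
  obtain q where q: "x < q" "D q = 0" "\<forall>z\<in>{x..<q}. D z \<noteq> 0"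
    using first_zero_after[OF assms(1) less_imp_le[OF uv(4)] uv(5) assms(2)] by blast
  have "sgn (D z) = sgn (D x)" if z: "z \<in> {p<..<q}" for z
  proof (cases "z \<le> x")
    case True
    have "D w \<noteq> 0" if "w \<in> {z..x}" for w
      using p(4) that z by auto
    then have "0 < D z * D x"
      using same_sign_if_no_zero[of z x] True z p(1) uv(1) by auto
    then show ?thesis
      by (auto simp: zero_less_mult_iff)
  next
    case False
    have "D w \<noteq> 0" if "w \<in> {x..z}" for w
      using q(3) that z by auto
    then have "0 < D x * D z"
      using same_sign_if_no_zero[of x z] False assms(1) by auto
    then show ?thesis
      by (auto simp: zero_less_mult_iff)
  qed
  moreover have "0 < p" "p < q" "sgn (D x) \<noteq> 0"
    using p(1,2) q(1) uv(1) assms(2) by (auto simp: sgn_0_0)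
  ultimately have "sign_component (sgn (D x)) p q"
    using p(3) q(2) unfolding sign_component_def by blast
  then show ?thesis
    using p(2) q(1) by auto
qed

lemma hsupp_f_unique_in_component:
  assumes "sign_component \<sigma> p q" "a \<in> hsupp f" "b \<in> hsupp f" "a \<in> {p<..<q}" "b \<in> {p<..<q}"
  shows "a = b"
proof -
  have "0 < a"
    using assms(2) hsupp_subset by auto
  then have "b / a * a \<in> {p<..<q}"
    using assms(5) by simp
  then have "b / a = 1"
    using sign_invariant_fixes_component[OF sign_invariant_ratio[OF not_links_f hsupp_subset assms(2,3)] assms(1,4)]
    by blast
  then show ?thesis
    using \<open>0 < a\<close> by (simp add: field_simps)
qed

lemma sign_invariant_hsupp_f:
  assumes "sign_invariant l" "s \<in> hsupp f"
  shows "l * s \<in> hsupp f"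
proof -
  have s: "0 < s" "D s < 0"
    using assms(2) hsupp_subset D_neg_on_hsupp_f by auto
  have l: "0 < l" "sgn (D (l * s)) = sgn (D s)"
    using assms(1) s(1) by (auto simp: sign_invariant_def)
  then have "0 < l * s" "D (l * s) \<noteq> 0" "sgn (D (l * s)) = - 1"
    using s by (auto simp: sgn_0_0)
  then obtain p q where pq: "l * s \<in> {p<..<q}" "sign_component (- 1) p q"
    using sign_component_exists[of "l * s"] by metis
  obtain y where y: "y \<in> hsupp f" "y \<in> {p<..<q}"
    using hsupp_f_meets_negative_component[OF pq(2)] by blast
  \<comment> \<open>Scaling by \<open>y / (l s)\<close> preserves signs and keeps \<open>l s\<close> in its component, so it is the identity.\<close>
  have "sign_invariant (y / s * (1 / l))"
    using sign_invariant_ratio[OF not_links_f hsupp_subset assms(2) y(1)] sign_invariant_inverse[OF assms(1)]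
    by (rule sign_invariant_mult)
  moreover have "y / s * (1 / l) * (l * s) = y"
    using l(1) s(1) by simp
  ultimately have "y / s * (1 / l) = 1"
    using sign_invariant_fixes_component[OF _ pq(2) pq(1)] y(2) by metis
  then show ?thesis
    using y(1) l(1) s(1) by (simp add: field_simps)
qed

lemma next_sign_component:
  assumes "sign_component \<sigma> p \<beta>"
  shows "\<exists>\<gamma>. sign_component (- \<sigma>) \<beta> \<gamma>"
proof -
  have \<beta>: "0 < \<beta>" "D \<beta> = 0" and p: "0 < p" "p < \<beta>" and sign: "\<forall>z\<in>{p<..<\<beta>}. sgn (D z) = \<sigma>"
    using assms by (auto simp: sign_component_def)
  obtain d where d: "0 < d" "d \<le> \<beta>" "\<forall>x y. \<beta> - d < x \<longrightarrow> x < \<beta> \<longrightarrow> \<beta> < y \<longrightarrow> y < \<beta> + d \<longrightarrow> D x * D y < 0"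
    using zero_sign_change[OF \<beta>] by blast
  define k where "k = min d (\<beta> - p) / 2"
  have k: "0 < k" "k < d" "k < \<beta> - p"
    using d(1) p(2) by (auto simp: k_def)
  define y where "y = \<beta> + k"
  have "D (\<beta> - k) * D y < 0" "sgn (D (\<beta> - k)) = \<sigma>"
    using d(3) sign k by (auto simp: y_def)
  then have y: "0 < y" "D y \<noteq> 0" "sgn (D y) = - \<sigma>"
    using \<beta>(1) k(1) by (auto simp: y_def mult_less_0_iff)
  then obtain p' \<gamma> where comp: "y \<in> {p'<..<\<gamma>}" "sign_component (- \<sigma>) p' \<gamma>"
    using sign_component_exists[of y] by auto
  \<comment> \<open>The component of \<open>y\<close> cannot contain the zero \<open>\<beta>\<close>, nor start after it (\<open>D\<close> changes sign at \<open>\<beta>\<close>).\<close>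
  have "p' = \<beta>"
  proof (rule ccontr)
    assume "p' \<noteq> \<beta>"
    then consider "p' < \<beta>" | "\<beta> < p'"
      by linarith
    then show False
    proof cases
      case 1
      then have "\<beta> \<in> {p'<..<\<gamma>}"
        using comp(1) k(1) by (auto simp: y_def)
      then have "sgn (D \<beta>) = - \<sigma>"
        using comp(2) unfolding sign_component_def by blast
      then show False
        using comp(2) \<beta>(2) by (simp add: sign_component_def)
    next
      case 2
      then have "D (\<beta> - k) * D p' < 0"
        using d(3) k comp(1) by (auto simp: y_def)
      then show False
        using comp(2) by (simp add: sign_component_def)
    qed
  qed
  then show ?thesis
    using comp(2) by blast
qed

end

context unlinked_pair
begin

lemma D_across_three_components:
  assumes comp: "sign_component (- 1) p \<beta>" "sign_component 1 \<beta> \<gamma>" "sign_component (- 1) \<gamma> q"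
    and s: "s \<in> hsupp f" "s \<in> {p<..<\<beta>}" and t: "t \<in> hsupp g" "t \<in> {\<beta><..<\<gamma>}"
    and s': "s' \<in> hsupp f" "s' \<in> {\<gamma><..<q}"
  shows "D s' * ((s - \<beta>) * (t - \<gamma>)) = D s * ((t - \<beta>) * (s' - \<gamma>))"
proof -
  have zeros: "0 < p" "D \<beta> = 0" "D \<gamma> = 0"
    using comp by (auto simp: sign_component_def)
  have positive: "0 < D z" if "z \<in> {\<beta><..<\<gamma>}" for z
    using comp(2) that unfolding sign_component_def by (metis sgn_1_pos)
  have negative: "D z < 0" if "z \<in> {p<..<\<beta>} \<union> {\<gamma><..<q}" for z
    using comp(1,3) that unfolding sign_component_def by (metis Un_iff sgn_1_neg)
  \<comment> \<open>Between \<open>s\<close> and \<open>s'\<close> the only kink of \<open>f\<close> or \<open>g\<close> is \<open>t\<close>: kinks of \<open>f\<close> lie where \<open>D < 0\<close>,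
    kinks of \<open>g\<close> where \<open>D > 0\<close>, and each component holds at most one of them.\<close>
  have split: "x \<in> {p<..<\<beta>} \<union> {\<gamma><..<q} \<or> x \<in> {\<beta>, \<gamma>} \<or> x \<in> {\<beta><..<\<gamma>}"
    if "x \<in> {s<..<s'}" for x
    using that s(2) s'(2) by auto
  have no_f: "x \<notin> hsupp f" if "x \<in> {s<..<s'}" for x
  proof
    assume x: "x \<in> hsupp f"
    then have "x \<in> {p<..<\<beta>} \<union> {\<gamma><..<q}"
      using split[OF that] D_neg_on_hsupp_f[OF x] positive[of x] zeros(2,3) by auto
    then show False
      using hsupp_f_unique_in_component[OF comp(1) s(1) x s(2)]
        hsupp_f_unique_in_component[OF comp(3) s'(1) x s'(2)] that by auto
  qed
  have no_g: "x \<notin> hsupp g" if "x \<in> {s<..<s'}" "x \<noteq> t" for x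
  proof
    assume x: "x \<in> hsupp g"
    then have "x \<in> {\<beta><..<\<gamma>}"
      using split[OF that(1)] swap.D_neg_on_hsupp_f[OF x] negative[of x] zeros(2,3) by (auto simp: swap_D)
    then show False
      using swap.hsupp_f_unique_in_component[of "- 1" \<beta> \<gamma> t x] comp(2) t x that(2)
      by (simp add: swap_sign_component)
  qed
  have "D t * (s - \<beta>) = D s * (t - \<beta>)"
    using s(2) t(2) zeros no_f no_g s'(2)
    by (intro D_secant_through_zero) auto
  moreover have "D s' * (t - \<gamma>) = D t * (s' - \<gamma>)"
    using s(2) t(2) zeros no_f no_g s'(2)
    by (intro D_secant_through_zero) auto
  ultimately show ?thesis
    by (metis mult.assoc mult.commute)
qed

lemma D_across_scaled_components:
  assumes l: "sign_invariant l"
    and comp: "sign_component (- 1) p \<beta>" "sign_component 1 \<beta> \<gamma>" "sign_component (- 1) \<gamma> q"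
    and s: "s \<in> hsupp f" "s \<in> {p<..<\<beta>}" and t: "t \<in> hsupp g" "t \<in> {\<beta><..<\<gamma>}"
    and s': "s' \<in> hsupp f" "s' \<in> {\<gamma><..<q}"
  shows "D (l * s') * ((s - \<beta>) * (t - \<gamma>)) = D (l * s) * ((t - \<beta>) * (s' - \<gamma>))"
proof -
  have "0 < l"
    using l by (simp add: sign_invariant_def)
  have "D (l * s') * ((l * s - l * \<beta>) * (l * t - l * \<gamma>))
      = D (l * s) * ((l * t - l * \<beta>) * (l * s' - l * \<gamma>))"
  proof (rule D_across_three_components)
    show "sign_component (- 1) (l * p) (l * \<beta>)" "sign_component 1 (l * \<beta>) (l * \<gamma>)"
      "sign_component (- 1) (l * \<gamma>) (l * q)"
      using sign_invariant_scale_component[OF l] comp by auto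
    show "l * s \<in> hsupp f" "l * s' \<in> hsupp f" "l * t \<in> hsupp g"
      using sign_invariant_hsupp_f[OF l] swap.sign_invariant_hsupp_f[of l] l s(1) s'(1) t(1)
      by (auto simp: swap_sign_invariant)
    show "l * s \<in> {l * p<..<l * \<beta>}" "l * t \<in> {l * \<beta><..<l * \<gamma>}" "l * s' \<in> {l * \<gamma><..<l * q}"
      using s(2) t(2) s'(2) \<open>0 < l\<close> by auto
  qed
  then have "(l * l) * (D (l * s') * ((s - \<beta>) * (t - \<gamma>))) = (l * l) * (D (l * s) * ((t - \<beta>) * (s' - \<gamma>)))"
    by (simp only: right_diff_distrib[symmetric]) (simp add: mult_ac)
  then show ?thesis
    using \<open>0 < l\<close> by simp
qed

lemma three_components:
  obtains p \<beta> \<gamma> q s t s' where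
    "sign_component (- 1) p \<beta>" "sign_component 1 \<beta> \<gamma>" "sign_component (- 1) \<gamma> q"
    "s \<in> hsupp f" "s \<in> {p<..<\<beta>}" "t \<in> hsupp g" "t \<in> {\<beta><..<\<gamma>}" "s' \<in> hsupp f" "s' \<in> {\<gamma><..<q}"
proof -
  obtain s where s: "s \<in> hsupp f"
    using hsupp_f_nontrivial by blast
  then have "0 < s" "D s < 0"
    using hsupp_subset D_neg_on_hsupp_f by auto
  then obtain p \<beta> where comp1: "s \<in> {p<..<\<beta>}" "sign_component (- 1) p \<beta>"
    using sign_component_exists[of s] by auto
  obtain \<gamma> where comp2: "sign_component 1 \<beta> \<gamma>"
    using next_sign_component[OF comp1(2)] by auto
  obtain q where comp3: "sign_component (- 1) \<gamma> q"
    using next_sign_component[OF comp2] by auto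
  obtain t where "t \<in> hsupp g" "t \<in> {\<beta><..<\<gamma>}"
    using swap.hsupp_f_meets_negative_component[of \<beta> \<gamma>] comp2 by (auto simp: swap_sign_component)
  moreover obtain s' where "s' \<in> hsupp f" "s' \<in> {\<gamma><..<q}"
    using hsupp_f_meets_negative_component[OF comp3] by blast
  ultimately show thesis
    using that comp1 comp2 comp3 s by blast
qed

lemma inconsistent: False
proof -
  obtain p \<beta> \<gamma> q s t s' where config:
    "sign_component (- 1) p \<beta>" "sign_component 1 \<beta> \<gamma>" "sign_component (- 1) \<gamma> q"
    "s \<in> hsupp f" "s \<in> {p<..<\<beta>}" "t \<in> hsupp g" "t \<in> {\<beta><..<\<gamma>}" "s' \<in> hsupp f" "s' \<in> {\<gamma><..<q}"
    by (rule three_components)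
  have "0 < s" "D s < 0"
    using config(4) hsupp_subset D_neg_on_hsupp_f by auto
  have order: "s < \<beta>" "\<beta> < t" "t < \<gamma>" "\<gamma> < s'"
    using config(5,7,9) by auto
  define r where "r = s' / s"
  have r: "1 < r" "sign_invariant r" "s' = r * s"
    using sign_invariant_ratio[OF not_links_f hsupp_subset config(4,8)] order \<open>0 < s\<close>
    by (auto simp: r_def)
  define A where "A = ((t - \<beta>) * (s' - \<gamma>)) / ((s - \<beta>) * (t - \<gamma>))"
  have "0 < (t - \<beta>) * (s' - \<gamma>)" "0 < (s - \<beta>) * (t - \<gamma>)"
    using order by (auto intro: mult_pos_pos mult_neg_neg)
  then have "0 < A"
    by (simp add: A_def)
  have scaled: "D (l * s') = A * D (l * s)" if "sign_invariant l" for l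
    using D_across_scaled_components[OF that config] order by (simp add: A_def eq_divide_eq)
  have "D (r ^ n * s) = A ^ n * D s" for n
  proof (induction n)
    case (Suc n)
    then show ?case
      using scaled[OF sign_invariant_power[OF r(2)], of n] r(3) by (simp add: mult.assoc mult.left_commute)
  qed simp
  moreover have "D ((1 / r) ^ n * s) = (1 / A) ^ n * D s" for n
  proof (induction n)
    case (Suc n)
    have "(1 / r) ^ Suc n * s' = (1 / r) ^ n * s"
      using r(1,3) by simp
    then show ?case
      using Suc scaled[OF sign_invariant_power[OF sign_invariant_inverse[OF r(2)]], of "Suc n"] \<open>0 < A\<close>
      by (simp add: field_simps)
  qed simp
  ultimately show False
    using no_geometric_scaling[OF r(1) \<open>0 < s\<close> _ \<open>0 < A\<close>] \<open>D s < 0\<close> by auto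
qed

end

section \<open>Hockey-stick curves of privacy loss distributions\<close>

definition hinge :: "real \<Rightarrow> real \<Rightarrow> real" where
  "hinge x z = max 0 (1 - x * exp (- z))"

lemma hinge_convex:
  assumes "0 \<le> u" "0 \<le> v" "u + v = 1"
  shows "hinge (u * x + v * y) z \<le> u * hinge x z + v * hinge y z"
proof -
  have "1 - (u * x + v * y) * exp (- z) = u * (1 - x * exp (- z)) + v * (1 - y * exp (- z))"
    using assms(3) by (simp add: algebra_simps)
  moreover have "u * (1 - x * exp (- z)) \<le> u * hinge x z" "v * (1 - y * exp (- z)) \<le> v * hinge y z"
    "0 \<le> u * hinge x z" "0 \<le> v * hinge y z"
    using assms(1,2) by (auto simp: hinge_def intro: mult_left_mono)
  ultimately show ?thesis
    unfolding hinge_def[of "u * x + v * y"] by linarith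
qed

lemma hinge_strict_midpoint:
  assumes "x1 < exp z" "exp z < x3"
  shows "hinge ((x1 + x3) / 2) z < (hinge x1 z + hinge x3 z) / 2"
proof -
  have "x1 * exp (- z) < 1" "1 < x3 * exp (- z)"
    using assms by (simp_all add: exp_minus field_simps)
  then show ?thesis
    by (auto simp: hinge_def max_def field_simps)
qed

locale pld =
  fixes \<mu> :: "real measure"
  assumes is_PLD: "is_PLD \<mu>"
begin

lemma sets_eq: "sets \<mu> = sets borel"
  using is_PLD by (simp add: is_PLD_def)

lemma space_eq: "space \<mu> = UNIV"
  using sets_eq_imp_space_eq[OF sets_eq] by simp

lemma finite_measure: "finite_measure \<mu>"
  using is_PLD by (simp add: is_PLD_def subprob_space_def)

lemma integrable_hinge: "0 \<le> x \<Longrightarrow> integrable \<mu> (\<lambda>z. hinge x z)"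
  by (rule finite_measure.integrable_const_bound[OF finite_measure, where B = 1])
    (auto simp: hinge_def measurable_cong_sets[OF sets_eq refl])

lemma integrable_exp: "integrable \<mu> (\<lambda>z. exp (- z))"
  using is_PLD
  by (intro integrableI_nonneg) (auto simp: is_PLD_def measurable_cong_sets[OF sets_eq refl] order_le_less_trans)

lemma integral_exp_le: "(\<integral> z. exp (- z) \<partial>\<mu>) \<le> 1"
proof -
  have "(\<integral> z. exp (- z) \<partial>\<mu>) = enn2real (\<integral>\<^sup>+ z. ennreal (exp (- z)) \<partial>\<mu>)"
    by (rule integral_eq_nn_integral) (auto simp: measurable_cong_sets[OF sets_eq refl])
  also have "\<dots> \<le> enn2real 1"
    using is_PLD by (intro enn2real_mono) (auto simp: is_PLD_def)
  finally show ?thesis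
    by simp
qed

lemma hockey_stick_of_eq: "hockey_stick_of \<mu> x = (\<integral> z. hinge x z \<partial>\<mu>) + (1 - measure \<mu> (space \<mu>))"
  by (simp add: hockey_stick_of_def hinge_def)

lemma hockey_stick_of_bounds:
  assumes "0 < x"
  shows "0 \<le> hockey_stick_of \<mu> x \<and> hockey_stick_of \<mu> x \<le> 1 \<and> 1 - x \<le> hockey_stick_of \<mu> x"
proof -
  let ?M = "measure \<mu> (space \<mu>)"
  have M: "?M \<le> 1"
    using is_PLD subprob_space.subprob_measure_le_1 by (auto simp: is_PLD_def)
  have integrable_one: "integrable \<mu> (\<lambda>z. 1)"
    by (rule finite_measure.integrable_const[OF finite_measure])
  have "(\<integral> z. hinge x z \<partial>\<mu>) \<le> (\<integral> z. 1 \<partial>\<mu>)"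
    using assms integrable_one by (intro integral_mono integrable_hinge) (auto simp: hinge_def)
  moreover have "(\<integral> z. 1 - x * exp (- z) \<partial>\<mu>) \<le> (\<integral> z. hinge x z \<partial>\<mu>)"
    using assms integrable_one integrable_exp
    by (intro integral_mono integrable_hinge) (auto simp: hinge_def)
  moreover have "(\<integral> z. 1 - x * exp (- z) \<partial>\<mu>) = (\<integral> z. 1 \<partial>\<mu>) - (\<integral> z. x * exp (- z) \<partial>\<mu>)"
    using integrable_one integrable_exp by (intro Bochner_Integration.integral_diff) auto
  then have "(\<integral> z. 1 - x * exp (- z) \<partial>\<mu>) = ?M - x * (\<integral> z. exp (- z) \<partial>\<mu>)"
    by simp
  moreover have "x * (\<integral> z. exp (- z) \<partial>\<mu>) \<le> x"
    using integral_exp_le assms by (simp add: mult_left_le)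
  moreover have "0 \<le> (\<integral> z. hinge x z \<partial>\<mu>)"
    by (simp add: hinge_def)
  ultimately show ?thesis
    using M unfolding hockey_stick_of_eq by simp
qed

lemma convex_on_hockey_stick_of: "convex_on {0<..} (hockey_stick_of \<mu>)"
proof (rule convex_onI)
  fix t x y :: real
  assume t: "0 < t" "t < 1" and xy: "x \<in> {0<..}" "y \<in> {0<..}"
  have "(\<integral> z. hinge ((1 - t) * x + t * y) z \<partial>\<mu>) \<le> (\<integral> z. (1 - t) * hinge x z + t * hinge y z \<partial>\<mu>)"
    using t xy
    by (intro integral_mono integrable_hinge hinge_convex Bochner_Integration.integrable_add
        integrable_mult_right) auto
  also have "\<dots> = (1 - t) * (\<integral> z. hinge x z \<partial>\<mu>) + t * (\<integral> z. hinge y z \<partial>\<mu>)"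
    using xy by (simp add: integrable_hinge)
  finally show "hockey_stick_of \<mu> ((1 - t) *\<^sub>R x + t *\<^sub>R y)
      \<le> (1 - t) * hockey_stick_of \<mu> x + t * hockey_stick_of \<mu> y"
    unfolding hockey_stick_of_eq by (simp add: algebra_simps)
qed (simp add: convex_real_interval)

lemma midpoint_affine_imp_null:
  assumes "0 < x1" "x1 < x3"
    and mid: "hockey_stick_of \<mu> ((x1 + x3) / 2) = (hockey_stick_of \<mu> x1 + hockey_stick_of \<mu> x3) / 2"
  shows "emeasure \<mu> {ln x1<..<ln x3} = 0"
proof -
  define G where "G \<zeta> = (hinge x1 \<zeta> + hinge x3 \<zeta>) / 2 - hinge ((x1 + x3) / 2) \<zeta>" for \<zeta>
  have G_nonneg: "0 \<le> G \<zeta>" for \<zeta>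
    using hinge_convex[of "1 / 2" "1 / 2" x1 x3 \<zeta>] by (simp add: G_def field_simps)
  have hinge_integrable: "integrable \<mu> (\<lambda>\<zeta>. hinge x1 \<zeta>)" "integrable \<mu> (\<lambda>\<zeta>. hinge x3 \<zeta>)"
    "integrable \<mu> (\<lambda>\<zeta>. hinge ((x1 + x3) / 2) \<zeta>)"
    using assms(1,2) by (auto intro: integrable_hinge)
  then have "(\<integral> \<zeta>. G \<zeta> \<partial>\<mu>) = 0" "integrable \<mu> G"
    using mid unfolding G_def hockey_stick_of_eq by simp_all
  then have G_AE: "AE \<zeta> in \<mu>. G \<zeta> = 0"
    using integral_nonneg_eq_0_iff_AE G_nonneg by blast
  have G_pos: "0 < G \<zeta>" if "\<zeta> \<in> {ln x1<..<ln x3}" for \<zeta>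
  proof -
    have "exp (ln x1) < exp \<zeta>" "exp \<zeta> < exp (ln x3)"
      using that by simp_all
    then have "x1 < exp \<zeta>" "exp \<zeta> < x3"
      using assms(1,2) by simp_all
    then show ?thesis
      using hinge_strict_midpoint[of x1 \<zeta> x3] by (simp add: G_def)
  qed
  have "AE \<zeta> in \<mu>. \<zeta> \<notin> {ln x1<..<ln x3}"
    using G_AE by eventually_elim (use G_pos in force)
  then show ?thesis
    by (rule AE_iff_measurable[THEN iffD1, rotated 2]) (auto simp: space_eq sets_eq)
qed

lemma exp_measure_support_in_hsupp:
  assumes "z \<in> measure_support \<mu>"
  shows "exp z \<in> hsupp (hockey_stick_of \<mu>)"
proof (rule ccontr)
  define w where "w = exp z"
  assume "exp z \<notin> hsupp (hockey_stick_of \<mu>)"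
  moreover have "0 < w"
    by (simp add: w_def)
  ultimately obtain d a b where d: "0 < d" "\<forall>y. \<bar>y - w\<bar> < d \<longrightarrow> 0 < y \<and> hockey_stick_of \<mu> y = a * y + b"
    using locally_affine_outside_hsupp[of w "hockey_stick_of \<mu>"] by (auto simp: w_def)
  define x1 where "x1 = w - d / 2"
  define x3 where "x3 = w + d / 2"
  have x: "0 < x1" "x1 < w" "w < x3" "w = (x1 + x3) / 2"
    using d(1) d(2)[rule_format, of x1] by (auto simp: x1_def x3_def)
  have "\<bar>x1 - w\<bar> < d" "\<bar>x3 - w\<bar> < d"
    using d(1) by (simp_all add: x1_def x3_def)
  then have "hockey_stick_of \<mu> x1 = a * x1 + b" "hockey_stick_of \<mu> x3 = a * x3 + b"
    "hockey_stick_of \<mu> w = a * w + b"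
    using d by auto
  then have "hockey_stick_of \<mu> ((x1 + x3) / 2) = (hockey_stick_of \<mu> x1 + hockey_stick_of \<mu> x3) / 2"
    unfolding x(4)[symmetric] by (simp add: x(4) field_simps)
  then have null: "emeasure \<mu> {ln x1<..<ln x3} = 0"
    using x by (intro midpoint_affine_imp_null) auto
  have "z \<in> {ln x1<..<ln x3}"
    using x(1-3) ln_less_cancel_iff[of x1 w] ln_less_cancel_iff[of w x3] by (simp add: w_def)
  then obtain \<epsilon> where "0 < \<epsilon>" "ball z \<epsilon> \<subseteq> {ln x1<..<ln x3}"
    using openE[of "{ln x1<..<ln x3}" z] by auto
  then have "emeasure \<mu> (ball z \<epsilon>) = 0"
    using null emeasure_mono[of "ball z \<epsilon>" "{ln x1<..<ln x3}" \<mu>] by (simp add: sets_eq)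
  moreover have "0 < emeasure \<mu> (ball z \<epsilon>)"
    using assms \<open>0 < \<epsilon>\<close> by (simp add: measure_support_def)
  ultimately show False
    by simp
qed

end

lemma nondeg_hockey_stick_properties:
  assumes "nondeg_hockey_stick h"
  shows "convex_on {0<..} h" "\<And>x. 0 < x \<Longrightarrow> 0 \<le> h x \<and> h x \<le> 1 \<and> 1 - x \<le> h x"
    "\<exists>a b. a \<in> hsupp h \<and> b \<in> hsupp h \<and> a \<noteq> b"
proof -
  obtain \<mu> a b where \<mu>: "is_PLD \<mu>" "\<forall>x>0. h x = hockey_stick_of \<mu> x"
    and ab: "a \<noteq> b" "a \<in> measure_support \<mu>" "b \<in> measure_support \<mu>"
    using assms unfolding nondeg_hockey_stick_def by blast
  interpret pld \<mu>
    by (rule pld.intro[OF \<mu>(1)])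
  show "convex_on {0<..} h"
  proof (rule convex_onI)
    fix t x y :: real
    assume t: "0 < t" "t < 1" and xy: "x \<in> {0<..}" "y \<in> {0<..}"
    then have "0 < (1 - t) * x + t * y"
      by (intro add_pos_pos) auto
    then show "h ((1 - t) *\<^sub>R x + t *\<^sub>R y) \<le> (1 - t) * h x + t * h y"
      using convex_onD[OF convex_on_hockey_stick_of, of t x y] t xy \<mu>(2) by simp
  qed (simp add: convex_real_interval)
  show "0 \<le> h x \<and> h x \<le> 1 \<and> 1 - x \<le> h x" if "0 < x" for x
    using hockey_stick_of_bounds[OF that] \<mu>(2) that by simp
  have "hsupp h = hsupp (hockey_stick_of \<mu>)"
    using \<mu>(2) by (intro hsupp_cong) simp
  then show "\<exists>a b. a \<in> hsupp h \<and> b \<in> hsupp h \<and> a \<noteq> b"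
    using exp_measure_support_in_hsupp ab by (metis exp_inj_iff)
qed

theorem theorem6p1:
  fixes h1 h2 :: "real \<Rightarrow> real"
  assumes "nondeg_hockey_stick h1" and "nondeg_hockey_stick h2"
    and "\<not> (\<forall>x>0. h1 x \<le> h2 x)" and "\<not> (\<forall>x>0. h2 x \<le> h1 x)"
  shows "links (hsupp h1) (Xset h1 h2) (Xset h2 h1) \<or> links (hsupp h2) (Xset h1 h2) (Xset h2 h1)"
proof (rule ccontr)
  assume "\<not> ?thesis"
  then interpret unlinked_pair h1 h2
    using nondeg_hockey_stick_properties[OF assms(1)] nondeg_hockey_stick_properties[OF assms(2)] assms(3,4)
    by unfold_locales (auto simp: Xset_def not_le)
  show False
    by (rule inconsistent)
qed

end
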